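(* Let $\mathcal{L}$ be a linear space of random variables on $\Omega$ containing all constants, and let $P$ be a coherent$_1$ marginal prevision on $\mathcal{L}$. Then $P$ is a finitely additive expectation on $\mathcal{L}$.
   Context: Random variables are real-valued functions on a nonempty set $\Omega$; marginal previsions $P(X)$ are extended real numbers. Coherence$_1$ (marginal case): $\{P(X):X\in\mathcal{L}\}$ is coherent$_1$ if for all finitely many $X_1,\dots,X_n\in\mathcal{L}$, all real $\alpha_1,\dots,\alpha_n$ with $\alpha_j\ge0$ whenever $P(X_j)=+\infty$ and $\alpha_j\le0$ whenever $P(X_j)=-\infty$, and all real $c_1,\dots,c_n$ with $c_j=P(X_j)$ whenever it is finite, $\sup_\omega\sum_{j=1}^n\alpha_j[X_j(\omega)-c_j]\ge0$. A finitely additive expectation on $\mathcal{L}$ is a map $L:\mathcal{L}\to\mathbb{R}\cup\{\pm\infty\}$ that is nonnegative ($X\le Y$ implies $L(X)\le L(Y)$), extended-linear ($L(\alpha X+\beta Y)=\alpha L(X)+\beta L(Y)$ for all real $\alpha,\beta$ whenever the right side is not of the form $\infty-\infty$, with $0\times(\pm\infty)=0$), and satisfies $L(1)=1$. *)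

theory Defs
  imports "HOL-Library.Extended_Real"
begin

text \<open>Random variables on \<Omega> are functions of type 'a \<Rightarrow> real (the type 'a plays the
role of the nonempty set \<Omega>); previsions take values in ereal.\<close>

definition rv_linear_space :: "('a \<Rightarrow> real) set \<Rightarrow> bool" where
  "rv_linear_space L \<longleftrightarrow>
     (\<forall>X\<in>L. \<forall>Y\<in>L. \<forall>a b::real. (\<lambda>\<omega>. a * X \<omega> + b * Y \<omega>) \<in> L)"

definition contains_constants :: "('a \<Rightarrow> real) set \<Rightarrow> bool" where
  "contains_constants L \<longleftrightarrow> (\<forall>c::real. (\<lambda>_. c) \<in> L)"

definition coherent1 :: "('a \<Rightarrow> real) set \<Rightarrow> (('a \<Rightarrow> real) \<Rightarrow> ereal) \<Rightarrow> bool" where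
  "coherent1 L P \<longleftrightarrow>
     (\<forall>(n::nat) (X::nat \<Rightarrow> 'a \<Rightarrow> real) (\<alpha>::nat \<Rightarrow> real) (c::nat \<Rightarrow> real).
        (\<forall>j<n. X j \<in> L) \<and>
        (\<forall>j<n. P (X j) = \<infinity> \<longrightarrow> \<alpha> j \<ge> 0) \<and>
        (\<forall>j<n. P (X j) = -\<infinity> \<longrightarrow> \<alpha> j \<le> 0) \<and>
        (\<forall>j<n. \<bar>P (X j)\<bar> \<noteq> \<infinity> \<longrightarrow> ereal (c j) = P (X j))
        \<longrightarrow> (SUP \<omega>. ereal (\<Sum>j<n. \<alpha> j * (X j \<omega> - c j))) \<ge> 0)"

text \<open>Finitely additive expectation on L.  Note that in ereal, 0 * (+-\<infinity>) = 0.\<close>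
definition fa_expectation :: "('a \<Rightarrow> real) set \<Rightarrow> (('a \<Rightarrow> real) \<Rightarrow> ereal) \<Rightarrow> bool" where
  "fa_expectation L E \<longleftrightarrow>
     (\<forall>X\<in>L. \<forall>Y\<in>L. (\<forall>\<omega>. X \<omega> \<le> Y \<omega>) \<longrightarrow> E X \<le> E Y) \<and>
     (\<forall>X\<in>L. \<forall>Y\<in>L. \<forall>a b::real.
        \<not> ((ereal a * E X = \<infinity> \<and> ereal b * E Y = -\<infinity>) \<or>
           (ereal a * E X = -\<infinity> \<and> ereal b * E Y = \<infinity>))
        \<longrightarrow> E (\<lambda>\<omega>. a * X \<omega> + b * Y \<omega>) = ereal a * E X + ereal b * E Y) \<and>
     E (\<lambda>_. 1) = 1"

end

theory Submission
  imports Defs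
begin

text \<open>Each property of an expectation is read off a single coherence test with at most three
gambles: if the prevision violated it, a suitable combination of X, Y and
\<lambda>\<omega>. a * X \<omega> + b * Y \<omega> with admissible weights would lose a positive amount in every state.
When a prevision is infinite, the price in that test is free, and choosing it large enough
yields the contradiction.\<close>

text \<open>The price c_j of a gamble with prevision v in a coherence test: v itself if it is
finite, otherwise the arbitrary real t.\<close>
definition price :: "ereal \<Rightarrow> real \<Rightarrow> real" where
  "price v t = (if \<bar>v\<bar> = \<infinity> then t else real_of_ereal v)"

lemma ereal_price: "\<bar>v\<bar> \<noteq> \<infinity> \<Longrightarrow> ereal (price v t) = v"
  by (simp add: price_def ereal_real')

lemma price_infinite: "\<bar>v\<bar> = \<infinity> \<Longrightarrow> price v t = t"
  by (simp add: price_def)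

lemma coherent1_sum_le:
  fixes n :: nat
  assumes "coherent1 L P"
    and "\<forall>j<n. X j \<in> L"
    and "\<forall>j<n. P (X j) = \<infinity> \<longrightarrow> \<alpha> j \<ge> 0"
    and "\<forall>j<n. P (X j) = -\<infinity> \<longrightarrow> \<alpha> j \<le> 0"
    and "\<forall>j<n. \<bar>P (X j)\<bar> \<noteq> \<infinity> \<longrightarrow> ereal (c j) = P (X j)"
    and bound: "\<And>\<omega>. (\<Sum>j<n. \<alpha> j * X j \<omega>) \<le> d"
  shows "(\<Sum>j<n. \<alpha> j * c j) \<le> d"
proof -
  have "0 \<le> (SUP \<omega>. ereal (\<Sum>j<n. \<alpha> j * (X j \<omega> - c j)))"
    using assms(1-5) unfolding coherent1_def by blast
  also have "\<dots> \<le> ereal (d - (\<Sum>j<n. \<alpha> j * c j))"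
  proof (rule SUP_least)
    fix \<omega>
    have "(\<Sum>j<n. \<alpha> j * (X j \<omega> - c j)) = (\<Sum>j<n. \<alpha> j * X j \<omega>) - (\<Sum>j<n. \<alpha> j * c j)"
      by (simp add: right_diff_distrib sum_subtractf)
    then show "ereal (\<Sum>j<n. \<alpha> j * (X j \<omega> - c j)) \<le> ereal (d - (\<Sum>j<n. \<alpha> j * c j))"
      using bound[of \<omega>] by simp
  qed
  finally show ?thesis by simp
qed

lemma coherent1_three_le:
  assumes coh: "coherent1 L P" and "X \<in> L" "Y \<in> L" "Z \<in> L"
    and "P X = \<infinity> \<Longrightarrow> a1 \<ge> 0" "P X = -\<infinity> \<Longrightarrow> a1 \<le> 0"
    and "P Y = \<infinity> \<Longrightarrow> a2 \<ge> 0" "P Y = -\<infinity> \<Longrightarrow> a2 \<le> 0"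
    and "P Z = \<infinity> \<Longrightarrow> a3 \<ge> 0" "P Z = -\<infinity> \<Longrightarrow> a3 \<le> 0"
    and bound: "\<And>\<omega>. a1 * X \<omega> + a2 * Y \<omega> + a3 * Z \<omega> \<le> d"
  shows "a1 * price (P X) t1 + a2 * price (P Y) t2 + a3 * price (P Z) t3 \<le> d"
proof -
  define G where "G = (\<lambda>j::nat. if j = 0 then X else if j = 1 then Y else Z)"
  define \<alpha> where "\<alpha> = (\<lambda>j::nat. if j = 0 then a1 else if j = 1 then a2 else a3)"
  define t where "t = (\<lambda>j::nat. if j = 0 then t1 else if j = 1 then t2 else t3)"
  have less3: "j < (3::nat) \<longleftrightarrow> j = 0 \<or> j = 1 \<or> j = 2" for j by auto
  have sum3: "(\<Sum>j<3. f j) = f 0 + f 1 + f 2" for f :: "nat \<Rightarrow> real"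
    by (simp add: numeral_3_eq_3 numeral_2_eq_2)
  have "(\<Sum>j<3. \<alpha> j * price (P (G j)) (t j)) \<le> d"
    by (rule coherent1_sum_le[OF coh, where X = G and \<alpha> = \<alpha>])
      (use assms in \<open>auto simp: less3 sum3 G_def \<alpha>_def t_def ereal_price\<close>)
  then show ?thesis by (simp add: sum3 G_def \<alpha>_def t_def)
qed

lemma coherent1_mono:
  assumes coh: "coherent1 L P" and X: "X \<in> L" and Y: "Y \<in> L"
    and le: "\<forall>\<omega>. X \<omega> \<le> Y \<omega>"
  shows "P X \<le> P Y"
proof (rule ccontr)
  assume "\<not> P X \<le> P Y"
  then have less: "P Y < P X" by simp
  then have "P X \<noteq> -\<infinity>" "P Y \<noteq> \<infinity>" by auto
  then have "price (P X) (price (P Y) 0 + 1) - price (P Y) (price (P X) 0 - 1) \<le> 0"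
    using coherent1_three_le[OF coh X Y X, of 1 "-1" 0 0] le by auto
  with less show False
    by (cases "P X"; cases "P Y") (auto simp: price_def)
qed

lemma coherent1_one:
  assumes coh: "coherent1 L P" and one: "(\<lambda>_. 1) \<in> L"
  shows "P (\<lambda>_. 1) = 1"
proof -
  let ?v = "P (\<lambda>_. 1)"
  have upper: "price ?v t \<le> 1" if "?v \<noteq> -\<infinity>" for t
    using coherent1_three_le[OF coh one one one, of 1 0 0 1 t] that by auto
  have lower: "1 \<le> price ?v t" if "?v \<noteq> \<infinity>" for t
    using coherent1_three_le[OF coh one one one, of "-1" 0 0 "-1" t] that by auto
  show ?thesis
  proof (cases ?v)
    case (real r)
    then show ?thesis using upper[of 0] lower[of 0] by (auto simp: price_def one_ereal_def)
  next
    case PInf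
    then show ?thesis using upper[of 2] by (auto simp: price_def)
  next
    case MInf
    then show ?thesis using lower[of 0] by (auto simp: price_def)
  qed
qed

lemma ereal_times_price:
  "\<bar>ereal a * v\<bar> \<noteq> \<infinity> \<Longrightarrow> ereal a * v = ereal (a * price v t)"
  by (cases v) (auto simp: price_def split: if_splits)

lemma ereal_times_finite_weight_zero:
  "\<bar>ereal a * v\<bar> \<noteq> \<infinity> \<Longrightarrow> \<bar>v\<bar> = \<infinity> \<Longrightarrow> a = 0"
  by (cases v) (auto split: if_splits)

lemma coherent1_linear_finite:
  assumes coh: "coherent1 L P" and X: "X \<in> L" and Y: "Y \<in> L" and Z: "Z \<in> L"
    and Z_eq: "\<And>\<omega>. Z \<omega> = a * X \<omega> + b * Y \<omega>"
    and fin_a: "\<bar>ereal a * P X\<bar> \<noteq> \<infinity>" and fin_b: "\<bar>ereal b * P Y\<bar> \<noteq> \<infinity>"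
  shows "P Z = ereal a * P X + ereal b * P Y"
proof -
  have a0: "P X = \<infinity> \<or> P X = -\<infinity> \<Longrightarrow> a = 0"
    using ereal_times_finite_weight_zero[OF fin_a] by auto
  have b0: "P Y = \<infinity> \<or> P Y = -\<infinity> \<Longrightarrow> b = 0"
    using ereal_times_finite_weight_zero[OF fin_b] by auto
  define s where "s = a * price (P X) 0 + b * price (P Y) 0"
  have sum: "ereal a * P X + ereal b * P Y = ereal s"
    using ereal_times_price[OF fin_a, of 0] ereal_times_price[OF fin_b, of 0] by (simp add: s_def)
  have upper: "price (P Z) t \<le> s" if "P Z \<noteq> -\<infinity>" for t
    using coherent1_three_le[OF coh X Y Z, of "-a" "-b" 1 0 0 0 t] a0 b0 that Z_eq
    by (auto simp: s_def)
  have lower: "s \<le> price (P Z) t" if "P Z \<noteq> \<infinity>" for t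
    using coherent1_three_le[OF coh X Y Z, of a b "-1" 0 0 0 t] a0 b0 that Z_eq
    by (auto simp: s_def)
  show ?thesis
  proof (cases "P Z")
    case (real r)
    then show ?thesis using upper[of 0] lower[of 0] sum by (simp add: price_def)
  next
    case PInf
    then show ?thesis using upper[of "s + 1"] by (simp add: price_infinite)
  next
    case MInf
    then show ?thesis using lower[of "s - 1"] by (simp add: price_infinite)
  qed
qed

lemma coherent1_linear_PInf:
  assumes coh: "coherent1 L P" and X: "X \<in> L" and Y: "Y \<in> L" and Z: "Z \<in> L"
    and Z_eq: "\<And>\<omega>. Z \<omega> = a * X \<omega> + b * Y \<omega>"
    and inf_a: "ereal a * P X = \<infinity>" and b: "ereal b * P Y \<noteq> -\<infinity>"
  shows "P Z = \<infinity>"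
proof (rule ccontr)
  assume Z_fin: "P Z \<noteq> \<infinity>"
  have sign_a: "(P X = \<infinity> \<and> a > 0) \<or> (P X = -\<infinity> \<and> a < 0)"
    using inf_a by (cases "P X") (auto split: if_splits)
  have "P Y = \<infinity> \<Longrightarrow> b \<ge> 0" "P Y = -\<infinity> \<Longrightarrow> b \<le> 0"
    using b by (auto split: if_splits)
  then have test: "a * price (P X) t + b * price (P Y) 0 - price (P Z) 0 \<le> 0" for t
    using coherent1_three_le[OF coh X Y Z, of a b "-1" 0 t 0 0] sign_a Z_fin Z_eq by auto
  have "price (P X) t = t" for t
    using sign_a by (auto simp: price_infinite)
  moreover have "a \<noteq> 0" using sign_a by auto
  ultimately show False
    using test[of "(price (P Z) 0 - b * price (P Y) 0 + 1) / a"] by simp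
qed

lemma coherent1_linear_MInf:
  assumes coh: "coherent1 L P" and X: "X \<in> L" and Y: "Y \<in> L" and Z: "Z \<in> L"
    and Z_eq: "\<And>\<omega>. Z \<omega> = a * X \<omega> + b * Y \<omega>"
    and inf_a: "ereal a * P X = -\<infinity>" and b: "ereal b * P Y \<noteq> \<infinity>"
  shows "P Z = -\<infinity>"
proof (rule ccontr)
  assume Z_fin: "P Z \<noteq> -\<infinity>"
  have sign_a: "(P X = \<infinity> \<and> a < 0) \<or> (P X = -\<infinity> \<and> a > 0)"
    using inf_a by (cases "P X") (auto split: if_splits)
  have "P Y = \<infinity> \<Longrightarrow> b \<le> 0" "P Y = -\<infinity> \<Longrightarrow> b \<ge> 0"
    using b by (auto split: if_splits)
  then have test: "price (P Z) 0 - a * price (P X) t - b * price (P Y) 0 \<le> 0" for t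
    using coherent1_three_le[OF coh X Y Z, of "-a" "-b" 1 0 t 0 0] sign_a Z_fin Z_eq by auto
  have "price (P X) t = t" for t
    using sign_a by (auto simp: price_infinite)
  moreover have "a \<noteq> 0" using sign_a by auto
  ultimately show False
    using test[of "(price (P Z) 0 - b * price (P Y) 0 - 1) / a"] by simp
qed

lemma coherent1_linear:
  assumes coh: "coherent1 L P" and X: "X \<in> L" and Y: "Y \<in> L" and Z: "Z \<in> L"
    and Z_eq: "\<And>\<omega>. Z \<omega> = a * X \<omega> + b * Y \<omega>"
    and no_inf_minus_inf:
      "\<not> ((ereal a * P X = \<infinity> \<and> ereal b * P Y = -\<infinity>) \<or>
          (ereal a * P X = -\<infinity> \<and> ereal b * P Y = \<infinity>))"
  shows "P Z = ereal a * P X + ereal b * P Y"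
proof -
  have Z_eq': "\<And>\<omega>. Z \<omega> = b * Y \<omega> + a * X \<omega>"
    by (simp add: Z_eq)
  consider "ereal a * P X = \<infinity> \<or> ereal b * P Y = \<infinity>"
    | "ereal a * P X = -\<infinity> \<or> ereal b * P Y = -\<infinity>"
    | "\<bar>ereal a * P X\<bar> \<noteq> \<infinity>" "\<bar>ereal b * P Y\<bar> \<noteq> \<infinity>"
    by (metis ereal_infinity_cases)
  then show ?thesis
  proof cases
    case 1
    then show ?thesis
      using coherent1_linear_PInf[OF coh X Y Z Z_eq] coherent1_linear_PInf[OF coh Y X Z Z_eq']
        no_inf_minus_inf by auto
  next
    case 2
    then show ?thesis
      using coherent1_linear_MInf[OF coh X Y Z Z_eq] coherent1_linear_MInf[OF coh Y X Z Z_eq']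
        no_inf_minus_inf by auto
  next
    case 3
    then show ?thesis by (rule coherent1_linear_finite[OF coh X Y Z Z_eq])
  qed
qed

theorem lemma5p4:
  fixes L :: "('a \<Rightarrow> real) set" and P :: "('a \<Rightarrow> real) \<Rightarrow> ereal"
  assumes "rv_linear_space L"
    and "contains_constants L"
    and "coherent1 L P"
  shows "fa_expectation L P"
  unfolding fa_expectation_def
proof (intro conjI ballI allI impI)
  show "P X \<le> P Y" if "X \<in> L" "Y \<in> L" "\<forall>\<omega>. X \<omega> \<le> Y \<omega>" for X Y
    using coherent1_mono[OF assms(3)] that by blast
  show "P (\<lambda>\<omega>. a * X \<omega> + b * Y \<omega>) = ereal a * P X + ereal b * P Y"
    if "X \<in> L" "Y \<in> L"
      and "\<not> ((ereal a * P X = \<infinity> \<and> ereal b * P Y = -\<infinity>) \<or>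
             (ereal a * P X = -\<infinity> \<and> ereal b * P Y = \<infinity>))"
    for X Y a b
    using coherent1_linear[OF assms(3) that(1,2) _ _ that(3)] assms(1) that(1,2)
    unfolding rv_linear_space_def by blast
  show "P (\<lambda>_. 1) = 1"
    using coherent1_one[OF assms(3)] assms(2) unfolding contains_constants_def by blast
qed

end
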